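(* Let $\mathbb{F}\in\{\mathbb{R},\mathbb{C}\}$, let $\nu$ be a vector norm on $\mathbb{F}^n$, and let $A\in\mathbb{F}^{n\times n}$ be paracontracting with respect to $\nu$. Let $K=\{x\in\mathbb{F}^n: Ax=x\}$ be the subspace of fixed points of $A$ and let $H=\mathcal{R}(I-A)$ be the range of $I-A$. Then $H$ is invariant under $A$, $H$ is complementary to $K$ (i.e. $\mathbb{F}^n=H\oplus K$), and $\nu^0_H(A)<1$; consequently $A$ is an $H$-contractor with respect to $\nu$.
   Context: $A$ is paracontracting with respect to $\nu$ if $\nu(Ax)<\nu(x)$ whenever $Ax\neq x$. For a subspace $H$ invariant under $A$, the partial norm is $\nu^0_H(A)=\sup_{0\neq x\in H}\nu(Ax)/\nu(x)$. The operator norm is $\nu^0(A)=\sup_{x\neq 0}\nu(Ax)/\nu(x)$. $A$ is nonexpansive with respect to $\nu$ if $\nu^0(A)\le 1$. $A$ is an $H$-contractor (with respect to $\nu$) if $A$ is nonexpansive, $H$ is invariant under $A$, and $\nu^0_H(A)<1$. *)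

theory Defs
  imports "HOL-Analysis.Analysis"
begin

text \<open>Vectors in F^n are modelled as 'a ^ 'n, matrices as 'a ^ 'n ^ 'n, where the
scalar field 'a will be instantiated to real and to complex.\<close>

definition is_vector_norm :: "('a::real_normed_field ^ 'n \<Rightarrow> real) \<Rightarrow> bool" where
  "is_vector_norm \<nu> \<longleftrightarrow>
     (\<forall>x. 0 \<le> \<nu> x) \<and> (\<forall>x. \<nu> x = 0 \<longleftrightarrow> x = 0) \<and>
     (\<forall>c x. \<nu> (c *s x) = norm c * \<nu> x) \<and>
     (\<forall>x y. \<nu> (x + y) \<le> \<nu> x + \<nu> y)"

definition paracontracting :: "('a::real_normed_field ^ 'n \<Rightarrow> real) \<Rightarrow> 'a ^ 'n ^ 'n \<Rightarrow> bool" where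
  "paracontracting \<nu> A \<longleftrightarrow> (\<forall>x. A *v x \<noteq> x \<longrightarrow> \<nu> (A *v x) < \<nu> x)"

definition invariant_under :: "('a::real_normed_field ^ 'n) set \<Rightarrow> 'a ^ 'n ^ 'n \<Rightarrow> bool" where
  "invariant_under H A \<longleftrightarrow> (\<forall>x\<in>H. A *v x \<in> H)"

definition partial_norm :: "('a::real_normed_field ^ 'n \<Rightarrow> real) \<Rightarrow> ('a ^ 'n) set \<Rightarrow> 'a ^ 'n ^ 'n \<Rightarrow> real" where
  "partial_norm \<nu> H A =
     (if H - {0} = {} then 0 else (SUP x \<in> H - {0}. \<nu> (A *v x) / \<nu> x))"

definition operator_norm :: "('a::real_normed_field ^ 'n \<Rightarrow> real) \<Rightarrow> 'a ^ 'n ^ 'n \<Rightarrow> real" where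
  "operator_norm \<nu> A = (SUP x \<in> UNIV - {0}. \<nu> (A *v x) / \<nu> x)"

definition nonexpansive :: "('a::real_normed_field ^ 'n \<Rightarrow> real) \<Rightarrow> 'a ^ 'n ^ 'n \<Rightarrow> bool" where
  "nonexpansive \<nu> A \<longleftrightarrow> operator_norm \<nu> A \<le> 1"

definition H_contractor :: "('a::real_normed_field ^ 'n \<Rightarrow> real) \<Rightarrow> ('a ^ 'n) set \<Rightarrow> 'a ^ 'n ^ 'n \<Rightarrow> bool" where
  "H_contractor \<nu> H A \<longleftrightarrow> nonexpansive \<nu> A \<and> invariant_under H A \<and> partial_norm \<nu> H A < 1"

definition complementary :: "('a::real_normed_field ^ 'n) set \<Rightarrow> ('a ^ 'n) set \<Rightarrow> bool" where
  "complementary H K \<longleftrightarrow> H \<inter> K = {0} \<and> {h + k | h k. h \<in> H \<and> k \<in> K} = UNIV"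

definition lemma2p5_claim :: "('a::real_normed_field ^ 'n \<Rightarrow> real) \<Rightarrow> 'a ^ 'n ^ 'n \<Rightarrow> bool" where
  "lemma2p5_claim \<nu> A \<longleftrightarrow>
     (let K = {x. A *v x = x}; H = range (\<lambda>x. x - A *v x) in
        invariant_under H A \<and> complementary H K \<and> partial_norm \<nu> H A < 1 \<and> H_contractor \<nu> H A)"

end

theory Submission
  imports Defs
begin

text \<open>Paracontractivity gives \<open>\<nu> (A x) \<le> \<nu> x\<close>. If \<open>y = x - A x\<close> were a nonzero fixed point
of \<open>A\<close>, then \<open>A\<^sup>k x = x - k y\<close>, so \<open>\<nu> (x - k y) \<le> \<nu> x\<close> for all \<open>k\<close>, which is absurd since
\<open>k \<nu> y\<close> is unbounded. Hence \<open>H \<inter> K = 0\<close> for \<open>H = R(I - A)\<close>, \<open>K = ker(I - A)\<close>, so \<open>I - A\<close>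
maps \<open>H\<close> injectively into itself, hence onto \<open>H\<close> by dimension; thus each \<open>x\<close> differs from some
\<open>h \<in> H\<close> by an element of \<open>K\<close>. A vector norm is convex, hence continuous, so
the ratio \<open>\<nu> (A x) / \<nu> x\<close> attains its maximum over \<open>H\<close> on the compact unit sphere of \<open>H\<close>; the
maximiser is not a fixed point, so by paracontractivity the maximum is below \<open>1\<close>.\<close>

lemma
  assumes "is_vector_norm \<nu>"
  shows vector_norm_nonneg: "0 \<le> \<nu> x"
    and vector_norm_eq_0_iff: "\<nu> x = 0 \<longleftrightarrow> x = 0"
    and vector_norm_smult: "\<nu> (c *s x) = norm c * \<nu> x"
    and vector_norm_triangle: "\<nu> (x + y) \<le> \<nu> x + \<nu> y"
  using assms unfolding is_vector_norm_def by auto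

lemma vector_norm_pos: "is_vector_norm \<nu> \<Longrightarrow> x \<noteq> 0 \<Longrightarrow> 0 < \<nu> x"
  using vector_norm_nonneg vector_norm_eq_0_iff by (metis less_eq_real_def)

lemma scaleR_eq_of_real_smult:
  fixes x :: "'a::real_normed_algebra_1 ^ 'n"
  shows "c *\<^sub>R x = of_real c *s x"
  by (simp add: vec_eq_iff of_real_def)

lemma vector_norm_scaleR: "is_vector_norm \<nu> \<Longrightarrow> \<nu> (c *\<^sub>R x) = \<bar>c\<bar> * \<nu> x"
  by (simp add: scaleR_eq_of_real_smult vector_norm_smult)

lemma vector_norm_minus: "is_vector_norm \<nu> \<Longrightarrow> \<nu> (- x) = \<nu> x"
  using vector_norm_scaleR[of \<nu> "-1" x] by simp

lemma vector_norm_convex_on: "is_vector_norm \<nu> \<Longrightarrow> convex_on UNIV \<nu>"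
  by (rule convex_onI) (auto intro: order_trans[OF vector_norm_triangle] simp: vector_norm_scaleR)

lemma vector_norm_continuous_on:
  fixes \<nu> :: "'a::{real_normed_field,euclidean_space} ^ 'n \<Rightarrow> real"
  assumes "is_vector_norm \<nu>"
  shows "continuous_on S \<nu>"
  using convex_on_continuous[OF open_UNIV vector_norm_convex_on[OF assms]]
  by (rule continuous_on_subset) simp

lemma paracontracting_le: "paracontracting \<nu> A \<Longrightarrow> \<nu> (A *v x) \<le> \<nu> x"
  unfolding paracontracting_def by (cases "A *v x = x") force+

lemma nonexpansiveI:
  assumes "is_vector_norm \<nu>" and "\<And>x. \<nu> (A *v x) \<le> \<nu> x"
  shows "nonexpansive \<nu> A"
  unfolding nonexpansive_def operator_norm_def
proof (rule cSUP_least)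
  have "axis undefined 1 \<in> UNIV - {0 :: 'a ^ 'n}"
    by (simp add: axis_eq_0_iff)
  then show "UNIV - {0 :: 'a ^ 'n} \<noteq> {}"
    by blast
  show "\<nu> (A *v x) / \<nu> x \<le> 1" if "x \<in> UNIV - {0}" for x
    using that assms vector_norm_pos[of \<nu> x] by simp
qed

lemma invariant_under_range_diff: "invariant_under (range (\<lambda>x. x - A *v x)) A"
  unfolding invariant_under_def by (auto simp: matrix_vector_mult_diff_distrib)

lemma range_diff_Int_fixed_points:
  assumes norm: "is_vector_norm \<nu>" and le: "\<And>x. \<nu> (A *v x) \<le> \<nu> x"
  shows "range (\<lambda>x. x - A *v x) \<inter> {x. A *v x = x} = {0}"
proof (intro equalityI subsetI)
  fix y assume "y \<in> range (\<lambda>x. x - A *v x) \<inter> {x. A *v x = x}"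
  then obtain x where y: "y = x - A *v x" and Ay: "A *v y = y"
    by auto
  have step: "A *v (x - of_nat k *s y) = x - of_nat (Suc k) *s y" for k
    using y by (simp add: matrix_vector_mult_diff_distrib vector_scalar_commute Ay algebra_simps)
  have orbit_bounded: "\<nu> (x - of_nat k *s y) \<le> \<nu> x" for k
  proof (induction k)
    case (Suc k)
    then show ?case
      using le[of "x - of_nat k *s y"] by (simp only: step)
  qed simp
  have "real k * \<nu> y \<le> 2 * \<nu> x" for k
  proof -
    have "real k * \<nu> y = \<nu> (x + - (x - of_nat k *s y))"
      using norm by (simp add: vector_norm_smult)
    also have "\<dots> \<le> \<nu> x + \<nu> (x - of_nat k *s y)"
      using norm by (metis vector_norm_triangle vector_norm_minus)
    finally show ?thesis
      using orbit_bounded[of k] by simp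
  qed
  then have "\<not> 0 < \<nu> y"
    by (metis reals_Archimedean3 not_less)
  then show "y \<in> {0}"
    using vector_norm_pos[OF norm] by auto
qed (auto intro!: range_eqI[of _ _ 0])

lemma range_plus_kernel_eq_UNIV:
  fixes f :: "'a::euclidean_space \<Rightarrow> 'a"
  assumes lin: "linear f" and trivial_Int: "range f \<inter> {x. f x = 0} = {0}"
  shows "{h + k | h k. h \<in> range f \<and> k \<in> {x. f x = 0}} = UNIV"
proof -
  have inj: "inj_on f (range f)"
  proof (rule inj_onI)
    fix a b assume "a \<in> range f" "b \<in> range f" "f a = f b"
    then have "a - b \<in> range f \<inter> {x. f x = 0}"
      using lin by (auto simp: linear_diff subspace_diff[OF linear_subspace_image[OF lin subspace_UNIV]])
    then show "a = b"
      using trivial_Int by auto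
  qed
  have "f ` range f = range f"
  proof (rule subspace_dim_equal)
    show "subspace (f ` range f)" "subspace (range f)"
      by (simp_all add: lin linear_subspace_image)
    show "dim (range f) \<le> dim (f ` range f)"
    proof -
      have "span (range f) = range f"
        by (simp add: span_eq_iff lin linear_subspace_image)
      then show ?thesis
        using dim_image_eq[OF lin, of "range f"] inj by (metis order_refl)
    qed
  qed auto
  have "x \<in> {h + k | h k. h \<in> range f \<and> k \<in> {x. f x = 0}}" for x
  proof -
    have "f x \<in> f ` range f"
      using \<open>f ` range f = range f\<close> by auto
    then obtain h where h: "h \<in> range f" "f x = f h"
      by blast
    then have "f (x - h) = 0"
      by (simp add: linear_diff[OF lin])
    with h(1) show ?thesis
      by (intro CollectI exI[of _ h] exI[of _ "x - h"]) auto
  qed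
  then show ?thesis
    by blast
qed

lemma vector_norm_ratio_attains_max:
  fixes \<nu> :: "'a::{real_normed_field,euclidean_space} ^ 'n \<Rightarrow> real"
  assumes norm: "is_vector_norm \<nu>" and H: "subspace H" and nontrivial: "H - {0} \<noteq> {}"
  shows "\<exists>x0\<in>H - {0}. \<forall>x\<in>H - {0}. \<nu> (A *v x) / \<nu> x \<le> \<nu> (A *v x0) / \<nu> x0"
proof -
  define g where "g x = \<nu> (A *v x) / \<nu> x" for x
  define S where "S = H \<inter> sphere 0 1"
  have normalize: "x /\<^sub>R norm x \<in> S" "g (x /\<^sub>R norm x) = g x" if "x \<in> H - {0}" for x
    using that H norm
    by (simp_all add: S_def subspace_scale,
        simp add: g_def scaleR_eq_of_real_smult vector_scalar_commute vector_norm_smult)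
  have "compact S"
    unfolding S_def by (rule closed_Int_compact[OF closed_subspace[OF H] compact_sphere])
  moreover have "S \<noteq> {}"
    using normalize(1) nontrivial by blast
  moreover have "continuous_on S g"
    unfolding g_def
  proof (intro continuous_on_divide ballI)
    show "continuous_on S (\<lambda>x. \<nu> (A *v x))"
      by (rule continuous_on_compose2[OF vector_norm_continuous_on[OF norm, where S = UNIV]
            linear_continuous_on[OF matrix_vector_mul_bounded_linear]]) simp
    show "\<nu> x \<noteq> 0" if "x \<in> S" for x
      using that norm by (auto simp: S_def vector_norm_eq_0_iff)
  qed (rule vector_norm_continuous_on[OF norm])
  ultimately obtain x0 where x0: "x0 \<in> S" "\<And>y. y \<in> S \<Longrightarrow> g y \<le> g x0"
    using continuous_attains_sup by metis
  have "x0 \<in> H - {0}"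
    using x0(1) by (auto simp: S_def)
  moreover have "g x \<le> g x0" if "x \<in> H - {0}" for x
    using x0(2)[OF normalize(1)[OF that]] normalize(2)[OF that] by simp
  ultimately show ?thesis
    unfolding g_def by blast
qed

lemma partial_norm_lt_1:
  fixes \<nu> :: "'a::{real_normed_field,euclidean_space} ^ 'n \<Rightarrow> real"
  assumes norm: "is_vector_norm \<nu>" and pc: "paracontracting \<nu> A"
    and H: "subspace H" and no_fixed_points: "H \<inter> {x. A *v x = x} = {0}"
  shows "partial_norm \<nu> H A < 1"
proof (cases "H - {0} = {}")
  case False
  then obtain x0 where x0: "x0 \<in> H - {0}"
    and max: "\<And>x. x \<in> H - {0} \<Longrightarrow> \<nu> (A *v x) / \<nu> x \<le> \<nu> (A *v x0) / \<nu> x0"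
    using vector_norm_ratio_attains_max[OF norm H] by blast
  have "A *v x0 \<noteq> x0"
    using x0 no_fixed_points by blast
  then have "\<nu> (A *v x0) / \<nu> x0 < 1"
    using pc vector_norm_pos[OF norm, of x0] x0 by (simp add: paracontracting_def)
  moreover have "(SUP x \<in> H - {0}. \<nu> (A *v x) / \<nu> x) \<le> \<nu> (A *v x0) / \<nu> x0"
    using False max by (rule cSUP_least)
  ultimately show ?thesis
    using False by (simp add: partial_norm_def)
qed (simp add: partial_norm_def)

lemma lemma2p5_claim_if_paracontracting:
  fixes \<nu> :: "'a::{real_normed_field,euclidean_space} ^ 'n \<Rightarrow> real"
  assumes norm: "is_vector_norm \<nu>" and pc: "paracontracting \<nu> A"
  shows "lemma2p5_claim \<nu> A"
proof -
  let ?f = "\<lambda>x. x - A *v x"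
  have le: "\<And>x. \<nu> (A *v x) \<le> \<nu> x"
    using pc by (rule paracontracting_le)
  have lin: "linear ?f"
    by (intro bounded_linear.linear bounded_linear_sub bounded_linear_ident
        matrix_vector_mul_bounded_linear)
  have kernel: "{x. A *v x = x} = {x. ?f x = 0}"
    by auto
  have trivial_Int: "range ?f \<inter> {x. A *v x = x} = {0}"
    using norm le by (rule range_diff_Int_fixed_points)
  have "complementary (range ?f) {x. A *v x = x}"
    using trivial_Int range_plus_kernel_eq_UNIV[OF lin] unfolding complementary_def kernel
    by simp
  moreover have "partial_norm \<nu> (range ?f) A < 1"
    using norm pc linear_subspace_image[OF lin subspace_UNIV] trivial_Int
    by (rule partial_norm_lt_1)
  ultimately show ?thesis
    unfolding lemma2p5_claim_def Let_def H_contractor_def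
    using invariant_under_range_diff nonexpansiveI[OF norm le] by simp
qed

theorem lemma2p5:
  shows "(\<forall>(\<nu> :: real ^ 'n \<Rightarrow> real) (A :: real ^ 'n ^ 'n).
            is_vector_norm \<nu> \<and> paracontracting \<nu> A \<longrightarrow> lemma2p5_claim \<nu> A)
       \<and> (\<forall>(\<nu> :: complex ^ 'n \<Rightarrow> real) (A :: complex ^ 'n ^ 'n).
            is_vector_norm \<nu> \<and> paracontracting \<nu> A \<longrightarrow> lemma2p5_claim \<nu> A)"
  using lemma2p5_claim_if_paracontracting[where 'a = real and 'n = 'n]
    lemma2p5_claim_if_paracontracting[where 'a = complex and 'n = 'n]
  by blast

end
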